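(* Let $K$ be a nonempty, compact and convex subset of a real Hausdorff locally convex topological vector space $X$, let $Y$ be an arbitrary nonempty set and let $U\subseteq K$ be dense in $K$. Let $f:K\times Y\to\mathbb R$ satisfy: (i) for every $y\in Y$ the map $x\mapsto f(x,y)$ is convex on $K$; (ii) $f$ is concavelike on $Y$, i.e. for all $y_1,y_2\in Y$, $t\in[0,1]$ there exists $y_3\in Y$ with $f(x,y_3)\ge(1-t)f(x,y_1)+tf(x,y_2)$ for all $x\in K$; (iii) the family $(f(\cdot,y))_{y\in Y}$ is an equicontinuous family in $C(K)$; (iv) $\sup_{y\in Y}f(x,y)<\infty$ for every $x\in K$. Then $$\inf_{x\in U}\sup_{y\in Y}f(x,y)=\sup_{y\in Y}\inf_{x\in U}f(x,y).$$
   Context: $C(K)$ is the set of continuous real-valued functions on $K$. A family $S\subseteq C(K)$ is equicontinuous if for every $x\in K$ and $\varepsilon>0$ there is a neighborhood $U_x$ of $x$ such that $|h(z)-h(x)|<\varepsilon$ for all $z\in U_x\cap K$ and all $h\in S$. *)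

theory Defs
  imports "HOL-Analysis.Analysis"
begin

definition locally_convex_tvs :: "'a::{real_vector,t2_space} itself \<Rightarrow> bool" where
  "locally_convex_tvs _ \<longleftrightarrow>
     continuous_on UNIV (\<lambda>(x::'a, y::'a). x + y) \<and>
     continuous_on UNIV (\<lambda>(c::real, x::'a). c *\<^sub>R x) \<and>
     (\<forall>x::'a. \<forall>W. open W \<and> x \<in> W \<longrightarrow> (\<exists>V. open V \<and> convex V \<and> x \<in> V \<and> V \<subseteq> W))"

definition equicontinuous_on :: "'a::topological_space set \<Rightarrow> ('a \<Rightarrow> real) set \<Rightarrow> bool" where
  "equicontinuous_on K S \<longleftrightarrow>
     (\<forall>x\<in>K. \<forall>e>0. \<exists>Ux. open Ux \<and> x \<in> Ux \<and>
        (\<forall>z\<in>Ux \<inter> K. \<forall>h\<in>S. \<bar>h z - h x\<bar> < e))"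

definition concavelike_on :: "'a set \<Rightarrow> 'b set \<Rightarrow> ('a \<Rightarrow> 'b \<Rightarrow> real) \<Rightarrow> bool" where
  "concavelike_on K Y f \<longleftrightarrow>
     (\<forall>y1\<in>Y. \<forall>y2\<in>Y. \<forall>t\<in>{0..1::real}. \<exists>y3\<in>Y. \<forall>x\<in>K.
        f x y3 \<ge> (1 - t) * f x y1 + t * f x y2)"

end

theory Submission
  imports Defs
begin

text \<open>Fix reals \<open>\<beta> < \<alpha> < inf\<^sub>U sup\<^sub>Y f\<close>. Equicontinuity transports
  \<open>sup\<^sub>Y f(u,\<cdot>) > \<alpha>\<close> from the dense set \<open>U\<close> to \<open>sup\<^sub>Y f(x,\<cdot>) > \<beta>\<close> for all
  \<open>x \<in> K\<close>, and compactness yields finitely many \<open>y\<close> with \<open>K = \<Union>\<^sub>y {f(\<cdot>,y) > \<beta>}\<close>.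
  Induction over this finite family, using concavelikeness, produces a single \<open>y \<in> Y\<close>
  with \<open>f(\<cdot>,y) \<ge> \<beta>\<close> on \<open>K\<close>, hence \<open>\<beta> \<le> sup\<^sub>Y inf\<^sub>U f\<close>. The induction step is the case
  of two convex functions \<open>g\<^sub>1, g\<^sub>2\<close> with \<open>max(g\<^sub>1, g\<^sub>2) \<ge> \<beta>\<close> on a convex set: separating
  the upper set of \<open>(g\<^sub>1 - \<beta>, g\<^sub>2 - \<beta>)\<close> from the open negative quadrant of \<open>\<real>\<^sup>2\<close> gives
  a line with nonpositive normal \<open>(p, q)\<close>, and \<open>t = q / (p + q)\<close> makes
  \<open>(1 - t) g\<^sub>1 + t g\<^sub>2 \<ge> \<beta>\<close>.\<close>

lemma convex_strict_sublevel_set: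
  assumes "convex_on C g"
  shows "convex {x\<in>C. g x < a}"
proof (rule convexI)
  fix x1 x2 and u v :: real
  assume x: "x1 \<in> {x\<in>C. g x < a}" "x2 \<in> {x\<in>C. g x < a}"
    and uv: "0 \<le> u" "0 \<le> v" "u + v = 1"
  have "u *\<^sub>R x1 + v *\<^sub>R x2 \<in> C"
    using convex_on_imp_convex[OF assms] x uv by (simp add: convex_def)
  moreover have "g (u *\<^sub>R x1 + v *\<^sub>R x2) \<le> u * g x1 + v * g x2"
    using assms x uv by (simp add: convex_on_def)
  moreover have "u * g x1 + v * g x2 < a"
  proof (cases "u = 0")
    case True
    then show ?thesis using x uv by simp
  next
    case False
    then have "u * g x1 < u * a" using x uv by simp
    moreover have "v * g x2 \<le> v * a" using x uv by (simp add: mult_left_mono)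
    ultimately have "u * g x1 + v * g x2 < (u + v) * a" by (simp add: distrib_right)
    then show ?thesis using uv by simp
  qed
  ultimately show "u *\<^sub>R x1 + v *\<^sub>R x2 \<in> {x\<in>C. g x < a}" by simp
qed

lemma nonpos_of_le_on_negative_quadrant:
  fixes p q b :: real
  assumes quadrant: "\<And>a c. a < 0 \<Longrightarrow> c < 0 \<Longrightarrow> b \<le> p * a + q * c"
  shows "p \<le> 0" "q \<le> 0" "b \<le> 0"
proof -
  have first_nonpos: "p' \<le> 0" if "\<And>a c. a < 0 \<Longrightarrow> c < 0 \<Longrightarrow> b \<le> p' * a + q' * c"
    for p' q' :: real
  proof (rule ccontr)
    assume "\<not> p' \<le> 0"
    define a where "a = - (\<bar>b\<bar> + \<bar>q'\<bar> + 1) / p'"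
    have "a < 0" "p' * a = - (\<bar>b\<bar> + \<bar>q'\<bar> + 1)"
      using \<open>\<not> p' \<le> 0\<close> by (auto simp: a_def divide_neg_pos add_pos_nonneg)
    then show False using that[of a "-1"] by linarith
  qed
  show "p \<le> 0" using first_nonpos quadrant by blast
  show "q \<le> 0" using first_nonpos[of q p] quadrant by (simp add: add.commute)
  show "b \<le> 0"
  proof (rule ccontr)
    assume "\<not> b \<le> 0"
    define s where "s = - (p + q)"
    have "0 \<le> s" using \<open>p \<le> 0\<close> \<open>q \<le> 0\<close> by (simp add: s_def)
    define e where "e = b / (s + 1)"
    have "0 < e" using \<open>\<not> b \<le> 0\<close> \<open>0 \<le> s\<close> by (simp add: e_def)
    have "b \<le> s * e" using quadrant[of "-e" "-e"] \<open>0 < e\<close> by (simp add: s_def algebra_simps)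
    also have "\<dots> < (s + 1) * e" using \<open>0 < e\<close> by (simp add: algebra_simps)
    also have "\<dots> = b" using \<open>0 \<le> s\<close> by (simp add: e_def)
    finally show False by simp
  qed
qed

lemma convex_upper_set_pair:
  assumes g1: "convex_on C g1" and g2: "convex_on C g2"
  shows "convex {z::real \<times> real. \<exists>x\<in>C. g1 x \<le> fst z \<and> g2 x \<le> snd z}"
proof (rule convexI)
  fix z1 z2 and u v :: real
  assume "z1 \<in> {z. \<exists>x\<in>C. g1 x \<le> fst z \<and> g2 x \<le> snd z}"
    and "z2 \<in> {z. \<exists>x\<in>C. g1 x \<le> fst z \<and> g2 x \<le> snd z}"
    and uv: "0 \<le> u" "0 \<le> v" "u + v = 1"
  then obtain x1 x2 where x: "x1 \<in> C" "x2 \<in> C"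
    and x1: "g1 x1 \<le> fst z1" "g2 x1 \<le> snd z1" and x2: "g1 x2 \<le> fst z2" "g2 x2 \<le> snd z2"
    by auto
  have "g (u *\<^sub>R x1 + v *\<^sub>R x2) \<le> u * w1 + v * w2"
    if "convex_on C g" "g x1 \<le> w1" "g x2 \<le> w2" for g w1 w2
  proof -
    have "g (u *\<^sub>R x1 + v *\<^sub>R x2) \<le> u * g x1 + v * g x2"
      using that(1) x uv by (simp add: convex_on_def)
    also have "\<dots> \<le> u * w1 + v * w2"
      using that uv by (intro add_mono mult_left_mono)
    finally show ?thesis .
  qed
  moreover have "u *\<^sub>R x1 + v *\<^sub>R x2 \<in> C"
    using convex_on_imp_convex[OF g1] x uv by (simp add: convex_def)
  ultimately show "u *\<^sub>R z1 + v *\<^sub>R z2 \<in> {z. \<exists>x\<in>C. g1 x \<le> fst z \<and> g2 x \<le> snd z}"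
    using g1 g2 x1 x2 by fastforce
qed

lemma convex_combination_ge_of_max_ge:
  fixes g1 g2 :: "'a::real_vector \<Rightarrow> real"
  assumes g1: "convex_on C g1" and g2: "convex_on C g2"
    and max_ge: "\<And>x. x \<in> C \<Longrightarrow> \<alpha> \<le> g1 x \<or> \<alpha> \<le> g2 x"
  shows "\<exists>t\<in>{0..1}. \<forall>x\<in>C. \<alpha> \<le> (1 - t) * g1 x + t * g2 x"
proof (cases "C = {}")
  case True
  then show ?thesis by auto
next
  case False
  have shift: "convex_on C (\<lambda>x. g x - \<alpha>)" if "convex_on C g" for g
    using convex_on_diff[OF that] convex_on_imp_convex[OF that] by (simp add: concave_on_const)
  define S where "S = {z::real \<times> real. \<exists>x\<in>C. g1 x - \<alpha> \<le> fst z \<and> g2 x - \<alpha> \<le> snd z}"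
  define T :: "(real \<times> real) set" where "T = {..<0} \<times> {..<0}"
  have "convex S" unfolding S_def by (rule convex_upper_set_pair[OF shift[OF g1] shift[OF g2]])
  moreover have "convex T" by (simp add: T_def convex_Times)
  moreover have "S \<noteq> {}" using False by (auto simp: S_def)
  moreover have "T \<noteq> {}" by (auto simp: T_def intro!: exI[of _ "-1"])
  moreover have "S \<inter> T = {}" using max_ge by (fastforce simp: S_def T_def)
  ultimately have "\<exists>w b. w \<noteq> 0 \<and> (\<forall>z\<in>S. inner w z \<le> b) \<and> (\<forall>z\<in>T. b \<le> inner w z)"
    by (rule separating_hyperplane_sets)
  then obtain p q b where "(p, q) \<noteq> 0" and pq_S: "\<forall>z\<in>S. inner (p, q) z \<le> b"
    and pq_T: "\<forall>z\<in>T. b \<le> inner (p, q) z"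
    by auto
  have "b \<le> p * a + q * c" if "a < 0" "c < 0" for a c
    using pq_T that by (auto simp: T_def)
  note signs = nonpos_of_le_on_negative_quadrant[OF this]
  have "p + q < 0" using signs \<open>(p, q) \<noteq> 0\<close> by (auto simp: zero_prod_def)
  have "\<alpha> \<le> (1 - q / (p + q)) * g1 x + q / (p + q) * g2 x" if "x \<in> C" for x
  proof -
    have "p * (g1 x - \<alpha>) + q * (g2 x - \<alpha>) \<le> 0"
      using pq_S signs(3) that by (force simp: S_def)
    then have "0 \<le> (p * (g1 x - \<alpha>) + q * (g2 x - \<alpha>)) / (p + q)"
      using \<open>p + q < 0\<close> by (simp add: divide_nonpos_neg)
    also have "\<dots> = (1 - q / (p + q)) * g1 x + q / (p + q) * g2 x - \<alpha>"
      using \<open>p + q < 0\<close> by (simp add: divide_simps) (simp add: algebra_simps)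
    finally show ?thesis by simp
  qed
  moreover have "q / (p + q) \<in> {0..1}"
    using signs \<open>p + q < 0\<close> by (auto simp: divide_nonpos_neg divide_le_eq_1)
  ultimately show ?thesis by blast
qed

lemma concavelike_uniform_ge_of_finite_cover:
  fixes f :: "'a::real_vector \<Rightarrow> 'b \<Rightarrow> real"
  assumes conv: "\<And>y. y \<in> Y \<Longrightarrow> convex_on K (\<lambda>x. f x y)"
    and concl: "concavelike_on K Y f"
    and "Y \<noteq> {}" "finite F" "F \<subseteq> Y"
    and "C \<subseteq> K" "convex C" "\<forall>x\<in>C. \<exists>y\<in>F. \<alpha> \<le> f x y"
  shows "\<exists>y\<in>Y. \<forall>x\<in>C. \<alpha> \<le> f x y"
  using assms(4-)
proof (induction F arbitrary: C rule: finite_induct)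
  case empty
  then show ?case using \<open>Y \<noteq> {}\<close> by auto
next
  case (insert y0 F C)
  have y0: "y0 \<in> Y" and "F \<subseteq> Y" using insert.prems(1) by auto
  have convex_on_C: "convex_on C (\<lambda>x. f x y)" if "y \<in> Y" for y
    using convex_on_subset[OF conv[OF that] insert.prems(2,3)] .
  define C' where "C' = {x\<in>C. f x y0 < \<alpha>}"
  have "convex C'" unfolding C'_def by (rule convex_strict_sublevel_set[OF convex_on_C[OF y0]])
  moreover have "C' \<subseteq> K" using insert.prems(2) by (auto simp: C'_def)
  moreover have "\<forall>x\<in>C'. \<exists>y\<in>F. \<alpha> \<le> f x y"
  proof
    fix x assume "x \<in> C'"
    then have "x \<in> C" "f x y0 < \<alpha>" by (auto simp: C'_def)
    then show "\<exists>y\<in>F. \<alpha> \<le> f x y" using insert.prems(4) by fastforce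
  qed
  ultimately obtain y1 where y1: "y1 \<in> Y" "\<forall>x\<in>C'. \<alpha> \<le> f x y1"
    using insert.IH[OF \<open>F \<subseteq> Y\<close>] by blast
  have "\<alpha> \<le> f x y1 \<or> \<alpha> \<le> f x y0" if "x \<in> C" for x
    using y1(2) that unfolding C'_def by fastforce
  then obtain t where t: "t \<in> {0..1}" "\<forall>x\<in>C. \<alpha> \<le> (1 - t) * f x y1 + t * f x y0"
    using convex_combination_ge_of_max_ge[OF convex_on_C[OF y1(1)] convex_on_C[OF y0]] by blast
  obtain y2 where y2: "y2 \<in> Y" "\<forall>x\<in>K. (1 - t) * f x y1 + t * f x y0 \<le> f x y2"
    using concl y1(1) y0 t(1) unfolding concavelike_on_def by blast
  have "\<alpha> \<le> f x y2" if "x \<in> C" for x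
    using t(2) y2(2) that insert.prems(2) by (meson order_trans subsetD)
  with y2(1) show ?case by blast
qed

lemma equicontinuous_exists_gt_on_closure:
  fixes f :: "'a::topological_space \<Rightarrow> 'b \<Rightarrow> real"
  assumes equi: "equicontinuous_on K ((\<lambda>y x. f x y) ` Y)"
    and U: "U \<subseteq> K" "K \<subseteq> closure U"
    and "\<beta> < \<alpha>" and gt_on_U: "\<And>u. u \<in> U \<Longrightarrow> \<exists>y\<in>Y. \<alpha> < f u y"
    and "x \<in> K"
  shows "\<exists>y\<in>Y. \<beta> < f x y"
proof -
  obtain V where "open V" "x \<in> V"
    and close: "\<forall>z\<in>V \<inter> K. \<forall>h\<in>(\<lambda>y x. f x y) ` Y. \<bar>h z - h x\<bar> < \<alpha> - \<beta>"
    using equi \<open>x \<in> K\<close> \<open>\<beta> < \<alpha>\<close> unfolding equicontinuous_on_def by (meson diff_gt_0_iff_gt)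
  have "V \<inter> U \<noteq> {}"
    using open_Int_closure_eq_empty[OF \<open>open V\<close>] \<open>x \<in> V\<close> \<open>x \<in> K\<close> U by blast
  then obtain u y where u: "u \<in> V" "u \<in> U" and y: "y \<in> Y" "\<alpha> < f u y"
    using gt_on_U by blast
  have "\<bar>f u y - f x y\<bar> < \<alpha> - \<beta>"
    using close u U y(1) by auto
  with y show ?thesis by (intro bexI[of _ y]) linarith+
qed

lemma compact_finite_subfamily_gt:
  fixes K :: "'a::topological_space set" and f :: "'a \<Rightarrow> 'b \<Rightarrow> real"
  assumes "compact K" and cont: "\<And>y. y \<in> Y \<Longrightarrow> continuous_on K (\<lambda>x. f x y)"
    and gt: "\<And>x. x \<in> K \<Longrightarrow> \<exists>y\<in>Y. \<beta> < f x y"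
  obtains F where "F \<subseteq> Y" "finite F" "\<And>x. x \<in> K \<Longrightarrow> \<exists>y\<in>F. \<beta> < f x y"
proof -
  have "\<exists>V. open V \<and> (\<forall>x\<in>K. x \<in> V \<longleftrightarrow> \<beta> < f x y)" if y: "y \<in> Y" for y
  proof -
    obtain V where "open V" "V \<inter> K = (\<lambda>x. f x y) -` {\<beta><..} \<inter> K"
      using cont[OF y] open_greaterThan unfolding continuous_on_open_invariant by blast
    then show ?thesis by blast
  qed
  then obtain V where V: "\<forall>y\<in>Y. open (V y) \<and> (\<forall>x\<in>K. x \<in> V y \<longleftrightarrow> \<beta> < f x y)"
    by metis
  have "K \<subseteq> (\<Union>y\<in>Y. V y)"
    using gt V by blast
  then obtain F where F: "F \<subseteq> Y" "finite F" "K \<subseteq> (\<Union>y\<in>F. V y)"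
    using compactE_image[OF \<open>compact K\<close>, of Y V] V by blast
  moreover have "\<exists>y\<in>F. \<beta> < f x y" if "x \<in> K" for x
    using F V that by blast
  ultimately show ?thesis using that by blast
qed

theorem mainTheorem15:
  fixes K U :: "'a::{real_vector,t2_space} set"
    and Y :: "'b set"
    and f :: "'a \<Rightarrow> 'b \<Rightarrow> real"
  assumes lctvs: "locally_convex_tvs TYPE('a)"
    and K: "K \<noteq> {}" "compact K" "convex K"
    and Y: "Y \<noteq> {}"
    and U: "U \<subseteq> K" "K \<subseteq> closure U"
    and conv: "\<And>y. y \<in> Y \<Longrightarrow> convex_on K (\<lambda>x. f x y)"
    and concl: "concavelike_on K Y f"
    and cont: "\<And>y. y \<in> Y \<Longrightarrow> continuous_on K (\<lambda>x. f x y)"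
    and equi: "equicontinuous_on K ((\<lambda>y x. f x y) ` Y)"
    and bdd: "\<And>x. x \<in> K \<Longrightarrow> bdd_above ((\<lambda>y. f x y) ` Y)"
  shows "(INF x\<in>U. SUP y\<in>Y. ereal (f x y)) = (SUP y\<in>Y. INF x\<in>U. ereal (f x y))"
proof (rule antisym)
  show "(INF x\<in>U. SUP y\<in>Y. ereal (f x y)) \<le> (SUP y\<in>Y. INF x\<in>U. ereal (f x y))"
  proof (rule dense_le)
    fix r assume "r < (INF x\<in>U. SUP y\<in>Y. ereal (f x y))"
    then obtain \<beta> where \<beta>: "r < ereal \<beta>" "ereal \<beta> < (INF x\<in>U. SUP y\<in>Y. ereal (f x y))"
      using ereal_dense2 by blast
    then obtain \<alpha> where \<alpha>: "\<beta> < \<alpha>" "ereal \<alpha> < (INF x\<in>U. SUP y\<in>Y. ereal (f x y))"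
      using ereal_dense2 by force
    have "\<exists>y\<in>Y. \<alpha> < f u y" if "u \<in> U" for u
      using less_INF_D[OF \<alpha>(2) that] by (simp add: less_SUP_iff)
    then have gt_on_K: "\<exists>y\<in>Y. \<beta> < f x y" if "x \<in> K" for x
      using equicontinuous_exists_gt_on_closure[OF equi U \<alpha>(1) _ that] by blast
    obtain F where F: "F \<subseteq> Y" "finite F" "\<And>x. x \<in> K \<Longrightarrow> \<exists>y\<in>F. \<beta> < f x y"
      using compact_finite_subfamily_gt[OF K(2) cont gt_on_K] by blast
    have "\<forall>x\<in>K. \<exists>y\<in>F. \<beta> \<le> f x y" using F(3) by (meson less_imp_le)
    then obtain y where "y \<in> Y" "\<forall>x\<in>K. \<beta> \<le> f x y"
      using concavelike_uniform_ge_of_finite_cover[OF conv concl Y F(2,1) order_refl K(3)] by blast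
    then have "ereal \<beta> \<le> (INF x\<in>U. ereal (f x y))"
      using U(1) by (intro INF_greatest) auto
    also have "\<dots> \<le> (SUP y\<in>Y. INF x\<in>U. ereal (f x y))"
      using \<open>y \<in> Y\<close> by (rule SUP_upper)
    finally show "r \<le> (SUP y\<in>Y. INF x\<in>U. ereal (f x y))" using \<beta>(1) by simp
  qed
  show "(SUP y\<in>Y. INF x\<in>U. ereal (f x y)) \<le> (INF x\<in>U. SUP y\<in>Y. ereal (f x y))"
    by (intro SUP_least INF_greatest order_trans[OF INF_lower SUP_upper])
qed

end
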